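(* Let $P_0(X)= 32 X^6-48 X^4+18 X^2-1$ and, for $p=(p_0,\dots,p_4)\in\mathbb R^5$, $P_p(X)=P_0(X)+\sum_{j=0}^4 p_j X^j$. The critical points of $P_0$ are $(\zeta_{i,0})_{1\le i\le 5}=(-\sqrt3/2,-1/2,0,1/2,\sqrt3/2)$, all non-degenerate, with critical values $(a_{i,0})_{1\le i\le 5}=(-1,1,-1,1,-1)$, and $\beta_0=1$ is a repelling fixed point of $P_0$. For $p$ near $0$ let $\zeta_{i,p}$, $a_{i,p}=P_p(\zeta_{i,p})$ and $\beta_p$ be the continuations of the critical points, critical values and of the fixed point $\beta_0$ for $P_p$. Then \[ \det\big[\partial_{p_j} (P_p(a_{i, p}))-\partial_{p_j} \beta_p \big]_{1\le i\le 5,\,0\le j\le 4} \neq 0 \quad \text{at } p=0 .\] *)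

theory Defs
  imports "HOL-Analysis.Analysis" "HOL-Library.Numeral_Type"
begin

definition P0 :: "real \<Rightarrow> real" where
  "P0 x = 32 * x ^ 6 - 48 * x ^ 4 + 18 * x ^ 2 - 1"

definition Pp :: "real ^ 5 \<Rightarrow> real \<Rightarrow> real" where
  "Pp p x = P0 x + (\<Sum>k<5. p $ (of_nat k) * x ^ k)"

text \<open>Critical points of P_0 in increasing order: row index 0..4 of type 5
  corresponds to i = 1..5 in the paper.\<close>
definition zeta0 :: "5 \<Rightarrow> real" where
  "zeta0 i = (if i = 0 then - sqrt 3 / 2 else if i = 1 then - 1 / 2 else if i = 2 then 0
              else if i = 3 then 1 / 2 else sqrt 3 / 2)"

end

theory Submission
  imports Defs
begin

text \<open>Write q_h(X) = \<Sum>_k h_k X^k for the perturbation in direction h. Differentiating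
  P_p(a_i,p) = P_p(P_p(\<zeta>_i,p)) at p = 0, the motion of \<zeta>_i contributes nothing because P_0'
  vanishes at \<zeta>_i,0; differentiating the fixed-point equation gives \<beta>'(h) = -q_h(1)/35 since
  P_0'(1) = 36. So row i of the matrix is the linear form h \<mapsto> P_0'(a_i) q_h(\<zeta>_i) + q_h(a_i) + q_h(1)/35,
  and the determinant is non-zero once these five forms have no common non-trivial zero. The rows of
  the opposite critical points \<plusminus>sqrt 3/2 and \<plusminus>1/2 force the odd part of q_h to vanish, and
  what remains is a regular 3 \<times> 3 rational system for h_0, h_2, h_4.\<close>

lemma exhaust_5:
  fixes x :: 5
  shows "x = 0 \<or> x = 1 \<or> x = 2 \<or> x = 3 \<or> x = 4"
proof (induct x)
  case (of_int z)
  then have "z = 0 \<or> z = 1 \<or> z = 2 \<or> z = 3 \<or> z = 4" by fastforce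
  then show ?case by auto
qed

lemma forall_5: "(\<forall>i::5. P i) \<longleftrightarrow> P 0 \<and> P 1 \<and> P 2 \<and> P 3 \<and> P 4"
  by (metis exhaust_5)

definition perturbation :: "real ^ 5 \<Rightarrow> real \<Rightarrow> real" where
  "perturbation h x = (\<Sum>k<5. h $ of_nat k * x ^ k)"

lemma perturbation_expand:
  "perturbation h x = h$0 + h$1 * x + h$2 * x^2 + h$3 * x^3 + h$4 * x^4"
  by (simp add: perturbation_def eval_nat_numeral)

lemma perturbation_zero [simp]: "perturbation 0 x = 0"
  by (simp add: perturbation_def)

lemma perturbation_add [simp]: "perturbation (a + b) x = perturbation a x + perturbation b x"
  by (simp add: perturbation_def sum.distrib algebra_simps)

lemma perturbation_scaleR [simp]: "perturbation (c *\<^sub>R a) x = c * perturbation a x"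
  by (simp add: perturbation_def sum_distrib_left algebra_simps)

lemma Pp_eq_P0_plus_perturbation: "Pp p x = P0 x + perturbation p x"
  by (simp add: Pp_def perturbation_def)

definition dP0 :: "real \<Rightarrow> real" where
  "dP0 x = 192 * x ^ 5 - 192 * x ^ 3 + 36 * x"

lemma Pp_comp_has_derivative:
  assumes "(g has_derivative G) (at 0)"
  shows "((\<lambda>p. Pp p (g p)) has_derivative (\<lambda>h. dP0 (g 0) * G h + perturbation h (g 0))) (at 0)"
proof -
  have "((\<lambda>p. Pp p (g p)) has_derivative
      (\<lambda>h. dP0 (g 0) * G h + (\<Sum>k<5. h $ of_nat k * g 0 ^ k
             + 0 $ of_nat k * (of_nat k * G h * g 0 ^ (k - 1))))) (at 0)"
    unfolding Pp_def P0_def dP0_def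
    by (rule derivative_eq_intros assms bounded_linear_imp_has_derivative bounded_linear_vec_nth refl)+
       (simp add: algebra_simps)
  then show ?thesis
    by (simp add: perturbation_def)
qed

lemma critical_value_has_derivative:
  assumes "(\<zeta> has_derivative Z) (at 0)" and "dP0 (\<zeta> 0) = 0"
  shows "((\<lambda>p. Pp p (Pp p (\<zeta> p))) has_derivative
           (\<lambda>h. dP0 (P0 (\<zeta> 0)) * perturbation h (\<zeta> 0) + perturbation h (P0 (\<zeta> 0)))) (at 0)"
proof -
  have "((\<lambda>p. Pp p (\<zeta> p)) has_derivative (\<lambda>h. perturbation h (\<zeta> 0))) (at 0)"
    using Pp_comp_has_derivative[OF assms(1)] assms(2) by simp
  from Pp_comp_has_derivative[OF this] show ?thesis
    by (simp add: Pp_eq_P0_plus_perturbation)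
qed

lemma fixed_point_derivative:
  assumes "(\<beta> has_derivative B) (at 0)" and "\<forall>\<^sub>F p in nhds 0. Pp p (\<beta> p) = \<beta> p"
  shows "(dP0 (\<beta> 0) - 1) * B h + perturbation h (\<beta> 0) = 0"
proof -
  have "((\<lambda>p. Pp p (\<beta> p) - \<beta> p) has_derivative
      (\<lambda>h. dP0 (\<beta> 0) * B h + perturbation h (\<beta> 0) - B h)) (at 0)"
    by (intro has_derivative_diff Pp_comp_has_derivative assms(1))
  moreover have "\<forall>\<^sub>F p in at 0. Pp p (\<beta> p) - \<beta> p = 0"
    using assms(2) eventually_nhds_conv_at by (auto elim: eventually_mono)
  moreover have "Pp 0 (\<beta> 0) - \<beta> 0 = 0"
    using eventually_nhds_x_imp_x[OF assms(2)] by simp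
  ultimately have "((\<lambda>p. 0) has_derivative
      (\<lambda>h. dP0 (\<beta> 0) * B h + perturbation h (\<beta> 0) - B h)) (at 0)"
    by (rule has_derivative_transform_eventually[where g = "\<lambda>_. 0"]) simp_all
  then have "(\<lambda>h. dP0 (\<beta> 0) * B h + perturbation h (\<beta> 0) - B h) = (\<lambda>h. 0)"
    using has_derivative_const has_derivative_unique by blast
  then have "dP0 (\<beta> 0) * B h + perturbation h (\<beta> 0) - B h = 0"
    by (rule fun_cong)
  then show ?thesis
    by (simp add: left_diff_distrib)
qed

lemma sqrt3_powers:
  "sqrt 3 ^ 2 = 3" "sqrt 3 ^ 3 = 3 * sqrt 3" "sqrt 3 ^ 4 = 9" "sqrt 3 ^ 5 = 9 * sqrt 3"
  "sqrt 3 ^ 6 = 27"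
proof -
  have sq: "sqrt 3 ^ 2 = 3" by simp
  have "sqrt 3 ^ 3 = sqrt 3 ^ 2 * sqrt 3" "sqrt 3 ^ 4 = (sqrt 3 ^ 2) ^ 2"
    "sqrt 3 ^ 5 = (sqrt 3 ^ 2) ^ 2 * sqrt 3" "sqrt 3 ^ 6 = (sqrt 3 ^ 2) ^ 3"
    by algebra+
  with sq show "sqrt 3 ^ 2 = 3" "sqrt 3 ^ 3 = 3 * sqrt 3" "sqrt 3 ^ 4 = 9"
    "sqrt 3 ^ 5 = 9 * sqrt 3" "sqrt 3 ^ 6 = 27"
    by simp_all
qed

lemma dP0_zeta0: "dP0 (zeta0 i) = 0"
  by (simp add: dP0_def zeta0_def sqrt3_powers power_divide)

text \<open>The derivative at p = 0 of P_p(a_i,p) - \<beta>_p in direction h, with \<beta>'(h) = -q_h(1)/35 already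
  substituted.\<close>
definition gap_derivative :: "5 \<Rightarrow> real ^ 5 \<Rightarrow> real" where
  "gap_derivative i h = dP0 (P0 (zeta0 i)) * perturbation h (zeta0 i)
     + perturbation h (P0 (zeta0 i)) + perturbation h 1 / 35"

lemma gap_derivative_kernel:
  assumes "\<And>i. gap_derivative i h = 0"
  shows "h = 0"
proof -
  let ?q = "perturbation h" and ?s = "sqrt 3 / 2"
  have P0_values: "P0 (- ?s) = -1" "P0 (- (1/2)) = 1" "P0 0 = -1" "P0 (1/2) = 1" "P0 ?s = -1"
    by (simp_all add: P0_def sqrt3_powers power_divide)
  have dP0_values: "dP0 (-1) = -36" "dP0 1 = 36"
    by (simp_all add: dP0_def)
  have row: "-36 * ?q (- ?s) + ?q (-1) + ?q 1 / 35 = 0" "36 * ?q (- (1/2)) + ?q 1 + ?q 1 / 35 = 0"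
    "-36 * ?q 0 + ?q (-1) + ?q 1 / 35 = 0" "36 * ?q (1/2) + ?q 1 + ?q 1 / 35 = 0"
    "-36 * ?q ?s + ?q (-1) + ?q 1 / 35 = 0"
    using assms[of 0] assms[of 1] assms[of 2] assms[of 3] assms[of 4]
    by (simp_all add: gap_derivative_def zeta0_def P0_values dP0_values)
  have "?q ?s = ?q (- ?s)" "?q (1/2) = ?q (- (1/2))"
    using row by simp_all
  then have "sqrt 3 * (h$1 + 3/4 * h$3) = 0" "h$1 + 1/4 * h$3 = 0"
    by (simp_all add: perturbation_expand sqrt3_powers power_divide algebra_simps)
  then have odd: "h$1 = 0" "h$3 = 0"
    by simp_all
  then have "h$0 = 0 \<and> h$2 = 0 \<and> h$4 = 0"
    using row(3-5) by (simp add: perturbation_expand sqrt3_powers power_divide field_simps)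
  with odd show ?thesis
    by (simp add: vec_eq_iff forall_5)
qed

lemma linear_gap_derivative: "linear (\<lambda>h. \<chi> i. gap_derivative i h)"
  by (intro linearI) (simp_all add: vec_eq_iff gap_derivative_def add_divide_distrib algebra_simps)

lemma det_gap_derivative: "det (matrix (\<lambda>h. \<chi> i. gap_derivative i h)) \<noteq> 0"
  using linear_gap_derivative gap_derivative_kernel
  by (simp add: det_nz_iff_inj linear_injective_0 vec_eq_iff)

theorem lemma2p12:
  fixes \<zeta> :: "5 \<Rightarrow> real ^ 5 \<Rightarrow> real" and \<beta> :: "real ^ 5 \<Rightarrow> real"
  assumes "\<And>i. \<zeta> i 0 = zeta0 i"
    and "\<beta> 0 = 1"
    and "\<And>i. \<zeta> i differentiable (at 0)"
    and "\<beta> differentiable (at 0)"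
    and "\<forall>\<^sub>F p in nhds 0. (\<forall>i. deriv (Pp p) (\<zeta> i p) = 0) \<and> Pp p (\<beta> p) = \<beta> p"
  shows "det (\<chi> i j. frechet_derivative (\<lambda>p. Pp p (Pp p (\<zeta> i p)) - \<beta> p) (at 0) (axis j 1))
           \<noteq> 0"
proof -
  obtain Z where Z: "\<And>i. (\<zeta> i has_derivative Z i) (at 0)"
    using assms(3) unfolding differentiable_def by metis
  obtain B where B: "(\<beta> has_derivative B) (at 0)"
    using assms(4) unfolding differentiable_def by metis
  have "\<forall>\<^sub>F p in nhds 0. Pp p (\<beta> p) = \<beta> p"
    using assms(5) by (rule eventually_mono) simp
  from fixed_point_derivative[OF B this] have B_fixed: "35 * B h + perturbation h 1 = 0" for h
    by (simp add: assms(2) dP0_def)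
  have B_eq: "B h = - perturbation h 1 / 35" for h
    using B_fixed[of h] by linarith
  have "((\<lambda>p. Pp p (Pp p (\<zeta> i p)) - \<beta> p) has_derivative gap_derivative i) (at 0)" for i
    using has_derivative_diff[OF critical_value_has_derivative[OF Z] B]
    by (simp add: assms(1) dP0_zeta0 B_eq gap_derivative_def [abs_def])
  then have "frechet_derivative (\<lambda>p. Pp p (Pp p (\<zeta> i p)) - \<beta> p) (at 0) = gap_derivative i" for i
    by (rule frechet_derivative_at[symmetric])
  then show ?thesis
    using det_gap_derivative by (simp add: matrix_def)
qed

end
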